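(* Let $\mathbb M$ be the single-sample mechanism described in the context, let $\rho^a,\rho^b\in\mathbb R^M_{>0}$, and let $M_a=\{j\in M:\rho^a_j\ge\rho^b_j\}$ and $M_b=\{j\in M:\rho^a_j\le\rho^b_j\}$. Then $${\rm LW}^{\mathbb M(\rho^a,\rho^b)}+{\rm LW}^{\mathbb M(\rho^b,\rho^a)}\ \ge\ {\rm LW}^{{\rm PCA}(M_a,\rho^a)}+{\rm LW}^{{\rm PCA}(M_b,\rho^b)}.$$
   Context: Market model. Buyers $N_0=\{1,\dots,n\}$, sellers $M=\{1,\dots,m\}$, bipartite edge set $E\subseteq N_0\times M$; edge $(i,j)$ written $ij$; $E_S$ is the set of edges incident to participants in $S$ ($E_i=E_{\{i\}}$); $w(F)=\sum_{e\in F}w_e$. Each seller $j$ has a monotone submodular $f_j:2^{E_j}\to\mathbb R_+$ with $f_j(\emptyset)=0$, polymatroid $P_j=\{y\in\mathbb R^{E_j}_+:y(F)\le f_j(F)\ \forall F\}$ ($f_j(E_j)$ = her total amount of a homogeneous divisible good). Buyer $i$ has per-unit valuation $v_i>0$ and budget $B_i\ge0$ (fixed). For an allocation with seller valuations $\rho$ in a market with seller set $M'$: $x_i=w(E_i)$ for buyers, $x_j=f_j(E_j)-w(E_j)$ for sellers, ${\rm LW}=\sum_{i\in N_0}\min(v_ix_i,B_i)+\sum_{j\in M'}\rho_jx_j$. Polyhedral Clinching Auction ${\rm PCA}$ with step $\varepsilon>0$ on a market with sellers $M'$ and seller bids $\sigma_j$: for each $j\in M'$ add a virtual buyer $n+j$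 adjacent only to $j$ with bid $\sigma_j$ and budget $\infty$; extend $f_j$ by $f_j(F)=f_j(E_j)$ if $(n+j)j\in F$; let $N$ be all (real and virtual) buyers, $P'=\{w\ge0: w|_{E_j}\in P_j\ \forall j\in M'\}$ (extended $P_j$), using only edges to sellers in $M'$. Bids $v'_i$ (virtual $n+j$: $\sigma_j$) are assumed positive multiples of $\varepsilon$. State: $w,p,r$, clocks $c_i$, demands $d_i$; initially $w=0,p=0,r=0,c_i=0,d_i=\infty$, $l$ = first buyer. With $P_{w,d}=\{y\ge0:w+y\in P',\ y(E_k)\le d_k\ \forall k\}$ and $P^i_{w,d}(\xi)=\{u\in\mathbb R^{N\setminus\{i\}}_+:\exists y\in P_{w,d},y|_{E_i}=\xi,y(E_k)=u_k\ \forall k\ne i\}$: while some $d_i\ne0$: (1) for each buyer $i$ in turn choose a maximal $\xi_i\in\mathbb R^{E_i}_+$ with $P^i_{w,d}(\xi_i)=P^i_{w,d}(0)$, set $p_i\leftarrow p_i+c_i\xi_i(E_i)$, $w\leftarrow w+\xi_i$, reset every $d_k=(B_k-p_k)/c_k$ if $c_k<v'_k$ else $0$ ($\infty$ while $c_k=0$); then $r_j\leftarrow r_j+\sum_{ij\in E_j}c_i\xi_{ij}$; (2) $c_l\leftarrow c_l+\varepsilon$, update $d_l$ likewise; (3) advance $l$ cyclically. Output: $w$, $p$ for real buyers, revenues $r_j-p_{n+j}$. ${\rm LW}^{{\rm PCA}(M',\sigma)}$ denotes the LW, in the submarket with seller set $M'$ (edges to $M'$ only, constraint $P'$) and seller valuations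 $\sigma$, of the allocation output by PCA when all participants bid truthfully (buyers bid $v$, sellers $\sigma$). Mechanism $\mathbb M$ (given buyers' bids $v'$, budgets $B$, sellers' bids $\rho'$, samples $\rho^s$): $\tilde M=\{j:\rho^s_j\ge\rho'_j\}$, $\tilde E=\{ij\in E:j\in\tilde M\}$; run PCA on sellers $\tilde M$, edges $\tilde E$, bids $v'$, budgets $B$, seller bids $\sigma_j=\rho^s_j$, obtaining $(w,p,r)$; output $w$ on $\tilde E$ and $0$ elsewhere, payments $p_i$, revenues $\rho^s_j\,w(\tilde E_j)$ for $j\in\tilde M$ and $0$ otherwise. ${\rm LW}^{\mathbb M(\rho^a,\rho^b)}$ is the LW in the full market, evaluated at seller valuations $\rho^a$, of the allocation output by $\mathbb M$ when all participants bid truthfully ($v'=v$, $\rho'=\rho^a$) and the samples are $\rho^b$ (sellers not in $\tilde M$ keep all their goods). *)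

theory Defs
  imports Complex_Main "HOL-Library.Extended_Real" "HOL-Library.While_Combinator"
begin

text \<open>Market: real buyers 1..n, sellers 1..m, edges are pairs (i,j) :: nat \<times> nat.
  Virtual buyer of seller j is buyer n + j with the single edge (n + j, j).\<close>

definition bedges :: "(nat \<times> nat) set \<Rightarrow> nat \<Rightarrow> (nat \<times> nat) set" where
  "bedges X i = {e \<in> X. fst e = i}"

definition sedges :: "(nat \<times> nat) set \<Rightarrow> nat \<Rightarrow> (nat \<times> nat) set" where
  "sedges X j = {e \<in> X. snd e = j}"

definition buyersN :: "nat \<Rightarrow> nat set \<Rightarrow> nat set" where
  "buyersN n M' = {1..n} \<union> (\<lambda>j. n + j) ` M'"

definition edgesX :: "nat \<Rightarrow> (nat \<times> nat) set \<Rightarrow> nat set \<Rightarrow> (nat \<times> nat) set" where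
  "edgesX n E M' = {e \<in> E. snd e \<in> M'} \<union> (\<lambda>j. (n + j, j)) ` M'"

definition fext :: "nat \<Rightarrow> (nat \<times> nat) set \<Rightarrow> (nat \<Rightarrow> (nat \<times> nat) set \<Rightarrow> real)
    \<Rightarrow> nat \<Rightarrow> (nat \<times> nat) set \<Rightarrow> real" where
  "fext n E f j F = (if (n + j, j) \<in> F then f j (sedges E j) else f j F)"

definition bidx :: "nat \<Rightarrow> (nat \<Rightarrow> real) \<Rightarrow> (nat \<Rightarrow> real) \<Rightarrow> nat \<Rightarrow> real" where
  "bidx n v \<sigma> k = (if k \<le> n then v k else \<sigma> (k - n))"

definition Pprime :: "nat \<Rightarrow> (nat \<times> nat) set \<Rightarrow> (nat \<Rightarrow> (nat \<times> nat) set \<Rightarrow> real) \<Rightarrow> nat set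
    \<Rightarrow> ((nat \<times> nat) \<Rightarrow> real) set" where
  "Pprime n E f M' = {w. (\<forall>e. e \<notin> edgesX n E M' \<longrightarrow> w e = 0)
      \<and> (\<forall>e \<in> edgesX n E M'. 0 \<le> w e)
      \<and> (\<forall>j \<in> M'. \<forall>F. F \<subseteq> sedges (edgesX n E M') j \<longrightarrow> sum w F \<le> fext n E f j F)}"

definition Pwd :: "nat \<Rightarrow> (nat \<times> nat) set \<Rightarrow> (nat \<Rightarrow> (nat \<times> nat) set \<Rightarrow> real) \<Rightarrow> nat set
    \<Rightarrow> ((nat \<times> nat) \<Rightarrow> real) \<Rightarrow> (nat \<Rightarrow> ereal) \<Rightarrow> ((nat \<times> nat) \<Rightarrow> real) set" where
  "Pwd n E f M' w d = {y. (\<forall>e. e \<notin> edgesX n E M' \<longrightarrow> y e = 0)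
      \<and> (\<forall>e \<in> edgesX n E M'. 0 \<le> y e)
      \<and> (\<lambda>e. w e + y e) \<in> Pprime n E f M'
      \<and> (\<forall>k \<in> buyersN n M'. ereal (sum y (bedges (edgesX n E M') k)) \<le> d k)}"

text \<open>P^i_{w,d}(xi): vectors u indexed by N - {i} (represented as functions that vanish
  outside N - {i}).\<close>
definition Piwd :: "nat \<Rightarrow> (nat \<times> nat) set \<Rightarrow> (nat \<Rightarrow> (nat \<times> nat) set \<Rightarrow> real) \<Rightarrow> nat set
    \<Rightarrow> ((nat \<times> nat) \<Rightarrow> real) \<Rightarrow> (nat \<Rightarrow> ereal) \<Rightarrow> nat \<Rightarrow> ((nat \<times> nat) \<Rightarrow> real)
    \<Rightarrow> (nat \<Rightarrow> real) set" where
  "Piwd n E f M' w d i \<xi> = {u. (\<forall>k. k \<notin> buyersN n M' - {i} \<longrightarrow> u k = 0)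
      \<and> (\<exists>y \<in> Pwd n E f M' w d.
            (\<forall>e \<in> bedges (edgesX n E M') i. y e = \<xi> e)
          \<and> (\<forall>k \<in> buyersN n M' - {i}. u k = sum y (bedges (edgesX n E M') k)))}"

definition XiSet :: "nat \<Rightarrow> (nat \<times> nat) set \<Rightarrow> (nat \<Rightarrow> (nat \<times> nat) set \<Rightarrow> real) \<Rightarrow> nat set
    \<Rightarrow> ((nat \<times> nat) \<Rightarrow> real) \<Rightarrow> (nat \<Rightarrow> ereal) \<Rightarrow> nat \<Rightarrow> ((nat \<times> nat) \<Rightarrow> real) set" where
  "XiSet n E f M' w d i = {\<xi>. (\<forall>e. e \<notin> bedges (edgesX n E M') i \<longrightarrow> \<xi> e = 0)
      \<and> (\<forall>e. 0 \<le> \<xi> e)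
      \<and> Piwd n E f M' w d i \<xi> = Piwd n E f M' w d i (\<lambda>_. 0)}"

definition choose_xi :: "nat \<Rightarrow> (nat \<times> nat) set \<Rightarrow> (nat \<Rightarrow> (nat \<times> nat) set \<Rightarrow> real) \<Rightarrow> nat set
    \<Rightarrow> ((nat \<times> nat) \<Rightarrow> real) \<Rightarrow> (nat \<Rightarrow> ereal) \<Rightarrow> nat \<Rightarrow> ((nat \<times> nat) \<Rightarrow> real)" where
  "choose_xi n E f M' w d i = (SOME \<xi>. \<xi> \<in> XiSet n E f M' w d i
      \<and> (\<forall>\<xi>' \<in> XiSet n E f M' w d i. (\<forall>e. \<xi> e \<le> \<xi>' e) \<longrightarrow> \<xi>' = \<xi>))"

record pca_state =
  sw :: "(nat \<times> nat) \<Rightarrow> real"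
  sp :: "nat \<Rightarrow> real"
  sr :: "nat \<Rightarrow> real"
  sc :: "nat \<Rightarrow> real"
  sd :: "nat \<Rightarrow> ereal"
  sl :: nat

text \<open>Demand of buyer k: infinity while c_k = 0; (B_k - p_k)/c_k if c_k below the bid
  (infinity for virtual buyers, whose budget is infinite); 0 otherwise.\<close>
definition dval :: "nat \<Rightarrow> (nat \<Rightarrow> real) \<Rightarrow> (nat \<Rightarrow> real) \<Rightarrow> (nat \<Rightarrow> real)
    \<Rightarrow> (nat \<Rightarrow> real) \<Rightarrow> (nat \<Rightarrow> real) \<Rightarrow> nat \<Rightarrow> ereal" where
  "dval n v B \<sigma> c p k =
     (if c k = 0 then \<infinity>
      else if c k < bidx n v \<sigma> k then (if k \<le> n then ereal ((B k - p k) / c k) else \<infinity>)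
      else 0)"

definition clinch_step :: "nat \<Rightarrow> (nat \<times> nat) set \<Rightarrow> (nat \<Rightarrow> (nat \<times> nat) set \<Rightarrow> real)
    \<Rightarrow> (nat \<Rightarrow> real) \<Rightarrow> (nat \<Rightarrow> real) \<Rightarrow> nat set \<Rightarrow> (nat \<Rightarrow> real)
    \<Rightarrow> pca_state \<Rightarrow> nat \<Rightarrow> pca_state" where
  "clinch_step n E f v B M' \<sigma> s i =
     (let X = edgesX n E M';
          \<xi> = choose_xi n E f M' (sw s) (sd s) i;
          p' = (sp s)(i := sp s i + sc s i * sum \<xi> (bedges X i));
          w' = (\<lambda>e. sw s e + \<xi> e);
          r' = (\<lambda>j. sr s j + (\<Sum>e \<in> sedges X j. sc s (fst e) * \<xi> e));
          d' = dval n v B \<sigma> (sc s) p'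
      in s\<lparr>sw := w', sp := p', sr := r', sd := d'\<rparr>)"

text \<open>One iteration of the while loop: steps (1), (2), (3). Buyers are processed in
  increasing order of index; sl is the position of the current buyer l in that order.\<close>
definition pca_round :: "nat \<Rightarrow> (nat \<times> nat) set \<Rightarrow> (nat \<Rightarrow> (nat \<times> nat) set \<Rightarrow> real)
    \<Rightarrow> real \<Rightarrow> (nat \<Rightarrow> real) \<Rightarrow> (nat \<Rightarrow> real) \<Rightarrow> nat set \<Rightarrow> (nat \<Rightarrow> real)
    \<Rightarrow> pca_state \<Rightarrow> pca_state" where
  "pca_round n E f \<epsilon> v B M' \<sigma> s =
     (let bs = sorted_list_of_set (buyersN n M');
          s1 = foldl (clinch_step n E f v B M' \<sigma>) s bs;
          l = bs ! sl s1;
          c' = (sc s1)(l := sc s1 l + \<epsilon>);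
          d' = (sd s1)(l := dval n v B \<sigma> c' (sp s1) l)
      in s1\<lparr>sc := c', sd := d', sl := (sl s1 + 1) mod length bs\<rparr>)"

definition pca_init :: pca_state where
  "pca_init = \<lparr>sw = (\<lambda>_. 0), sp = (\<lambda>_. 0), sr = (\<lambda>_. 0), sc = (\<lambda>_. 0),
               sd = (\<lambda>_. \<infinity>), sl = 0\<rparr>"

text \<open>Final state of PCA (if the loop does not terminate, the initial state is returned;
  the loop terminates under the standing assumptions).\<close>
definition pca :: "nat \<Rightarrow> (nat \<times> nat) set \<Rightarrow> (nat \<Rightarrow> (nat \<times> nat) set \<Rightarrow> real)
    \<Rightarrow> real \<Rightarrow> (nat \<Rightarrow> real) \<Rightarrow> (nat \<Rightarrow> real) \<Rightarrow> nat set \<Rightarrow> (nat \<Rightarrow> real) \<Rightarrow> pca_state" where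
  "pca n E f \<epsilon> v B M' \<sigma> =
     (case while_option (\<lambda>s. \<exists>i \<in> buyersN n M'. sd s i \<noteq> 0)
                        (pca_round n E f \<epsilon> v B M' \<sigma>) pca_init of
        Some s \<Rightarrow> s | None \<Rightarrow> pca_init)"

definition LW_sub :: "nat \<Rightarrow> (nat \<times> nat) set \<Rightarrow> (nat \<Rightarrow> (nat \<times> nat) set \<Rightarrow> real)
    \<Rightarrow> (nat \<Rightarrow> real) \<Rightarrow> (nat \<Rightarrow> real) \<Rightarrow> nat set \<Rightarrow> (nat \<Rightarrow> real) \<Rightarrow> ((nat \<times> nat) \<Rightarrow> real) \<Rightarrow> real" where
  "LW_sub n E f v B M' \<rho> w =
     (\<Sum>i \<in> {1..n}. min (v i * sum w (bedges {e \<in> E. snd e \<in> M'} i)) (B i))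
     + (\<Sum>j \<in> M'. \<rho> j * (f j (sedges E j) - sum w (sedges E j)))"

definition LW_full :: "nat \<Rightarrow> nat \<Rightarrow> (nat \<times> nat) set \<Rightarrow> (nat \<Rightarrow> (nat \<times> nat) set \<Rightarrow> real)
    \<Rightarrow> (nat \<Rightarrow> real) \<Rightarrow> (nat \<Rightarrow> real) \<Rightarrow> (nat \<Rightarrow> real) \<Rightarrow> ((nat \<times> nat) \<Rightarrow> real) \<Rightarrow> real" where
  "LW_full n m E f v B \<rho> w =
     (\<Sum>i \<in> {1..n}. min (v i * sum w (bedges E i)) (B i))
     + (\<Sum>j \<in> {1..m}. \<rho> j * (f j (sedges E j) - sum w (sedges E j)))"

definition LW_PCA :: "nat \<Rightarrow> (nat \<times> nat) set \<Rightarrow> (nat \<Rightarrow> (nat \<times> nat) set \<Rightarrow> real)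
    \<Rightarrow> real \<Rightarrow> (nat \<Rightarrow> real) \<Rightarrow> (nat \<Rightarrow> real) \<Rightarrow> nat set \<Rightarrow> (nat \<Rightarrow> real) \<Rightarrow> real" where
  "LW_PCA n E f \<epsilon> v B M' \<sigma> =
     LW_sub n E f v B M' \<sigma> (\<lambda>e. if e \<in> E \<and> snd e \<in> M' then sw (pca n E f \<epsilon> v B M' \<sigma>) e else 0)"

text \<open>Allocation output by mechanism M with buyer bids v, seller bids \<rho>' and samples \<rho>s.\<close>
definition mech_alloc :: "nat \<Rightarrow> nat \<Rightarrow> (nat \<times> nat) set \<Rightarrow> (nat \<Rightarrow> (nat \<times> nat) set \<Rightarrow> real)
    \<Rightarrow> real \<Rightarrow> (nat \<Rightarrow> real) \<Rightarrow> (nat \<Rightarrow> real) \<Rightarrow> (nat \<Rightarrow> real) \<Rightarrow> (nat \<Rightarrow> real)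
    \<Rightarrow> ((nat \<times> nat) \<Rightarrow> real)" where
  "mech_alloc n m E f \<epsilon> v B \<rho>' \<rho>s =
     (let Mt = {j \<in> {1..m}. \<rho>s j \<ge> \<rho>' j};
          s = pca n E f \<epsilon> v B Mt \<rho>s
      in (\<lambda>e. if e \<in> E \<and> snd e \<in> Mt then sw s e else 0))"

text \<open>LW^{M(\<rho>a, \<rho>b)}: truthful bids, valuations \<rho>a, samples \<rho>b.\<close>
definition LW_mech :: "nat \<Rightarrow> nat \<Rightarrow> (nat \<times> nat) set \<Rightarrow> (nat \<Rightarrow> (nat \<times> nat) set \<Rightarrow> real)
    \<Rightarrow> real \<Rightarrow> (nat \<Rightarrow> real) \<Rightarrow> (nat \<Rightarrow> real) \<Rightarrow> (nat \<Rightarrow> real) \<Rightarrow> (nat \<Rightarrow> real) \<Rightarrow> real" where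
  "LW_mech n m E f \<epsilon> v B \<rho>a \<rho>b =
     LW_full n m E f v B \<rho>a (mech_alloc n m E f \<epsilon> v B \<rho>a \<rho>b)"

end

theory Submission
  imports Defs "HOL-Analysis.Analysis"
begin

(* M(\<rho>a, \<rho>b) keeps exactly the sellers M_b and runs PCA on them with the samples \<rho>b as
   seller bids, so it outputs the allocation w_b of PCA(M_b, \<rho>b).  The two liquid welfares
   therefore share the buyers' part and differ only in the sellers' part, which M(\<rho>a, \<rho>b)
   values at \<rho>a over all sellers and PCA(M_b, \<rho>b) at \<rho>b over M_b; symmetrically for
   M(\<rho>b, \<rho>a) with w_a.  What remains is an inequality seller by seller: if \<rho>a_j < \<rho>b_j, then
   j sells nothing under w_a and the slack is \<rho>a_j f_j(E_j) + (\<rho>b_j - \<rho>a_j) w_b(E_j) \<ge> 0.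

   So the only property of PCA needed is that its allocation is nonnegative.  It follows from
   the loop invariant "w \<in> P', demands as prescribed, payments within budget", which is
   preserved because a maximal clinching vector always exists: the admissible ones form a
   compact set. *)

declare split_paired_All[simp del] split_paired_Ex[simp del]

lemma compact_PiE_UNIV:
  fixes S :: "'a \<Rightarrow> 'b::topological_space set"
  assumes "\<And>i. compact (S i)"
  shows "compact (PiE UNIV S)"
proof -
  have "compactin (product_topology (\<lambda>_. euclidean) UNIV) (PiE UNIV S)"
    using assms by (subst compactin_PiE) auto
  then show ?thesis by (simp add: euclidean_product_topology)
qed

lemma continuous_on_sum_coordinates: "continuous_on S (\<lambda>y :: 'a \<Rightarrow> real. sum y F)"
  by (intro continuous_intros continuous_on_subset[OF continuous_on_product_coordinates] subset_UNIV)

lemma closed_sum_le_ereal: "closed {y :: 'a \<Rightarrow> real. ereal (sum y F) \<le> c}"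
proof (cases c)
  case (real r)
  then show ?thesis
    using closed_Collect_le[OF continuous_on_sum_coordinates continuous_on_const] by simp
qed auto

lemma closed_Collect_const_imp: "(P \<Longrightarrow> closed {x. Q x}) \<Longrightarrow> closed {x. P \<longrightarrow> Q x}"
  by (cases P) auto

lemma compact_has_componentwise_maximal:
  fixes K :: "('a \<Rightarrow> real) set"
  assumes "compact K" and "K \<noteq> {}" and "finite D"
    and zero_outside: "\<And>\<xi> e. \<xi> \<in> K \<Longrightarrow> e \<notin> D \<Longrightarrow> \<xi> e = 0"
  shows "\<exists>\<xi>\<in>K. \<forall>\<xi>'\<in>K. (\<forall>e. \<xi> e \<le> \<xi>' e) \<longrightarrow> \<xi>' = \<xi>"
proof -
  obtain \<xi> where "\<xi> \<in> K" and max: "\<forall>\<xi>'\<in>K. sum \<xi>' D \<le> sum \<xi> D"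
    using continuous_attains_sup[OF assms(1,2) continuous_on_sum_coordinates] by blast
  moreover have "\<xi>' = \<xi>" if "\<xi>' \<in> K" and le: "\<forall>e. \<xi> e \<le> \<xi>' e" for \<xi>'
  proof
    fix e
    have "sum \<xi>' D = sum \<xi> D"
      using max that by (meson order_antisym sum_mono)
    show "\<xi>' e = \<xi> e"
    proof (cases "e \<in> D")
      case True
      then show ?thesis
        using sum_mono_inv[of \<xi> D \<xi>' e] \<open>sum \<xi>' D = sum \<xi> D\<close> le \<open>finite D\<close> by simp
    next
      case False
      then show ?thesis
        using zero_outside[OF \<open>\<xi> \<in> K\<close> False] zero_outside[OF \<open>\<xi>' \<in> K\<close> False] by simp
    qed
  qed
  ultimately show ?thesis by blast
qed

lemma Pprime_nonneg: "w \<in> Pprime n E f M' \<Longrightarrow> 0 \<le> w e"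
  unfolding Pprime_def by (cases "e \<in> edgesX n E M'") auto

lemma Pprime_downward_closed:
  assumes z: "z \<in> Pprime n E f M'" and x_nonneg: "\<And>e. 0 \<le> x e" and x_le_z: "\<And>e. x e \<le> z e"
  shows "x \<in> Pprime n E f M'"
proof -
  have "x e = 0" if "e \<notin> edgesX n E M'" for e
  proof -
    have "z e = 0"
      using z that unfolding Pprime_def by blast
    then show ?thesis
      using x_nonneg[of e] x_le_z[of e] by simp
  qed
  moreover have "sum x F \<le> fext n E f j F" if "j \<in> M'" and "F \<subseteq> sedges (edgesX n E M') j" for j F
  proof -
    have "sum z F \<le> fext n E f j F"
      using z that unfolding Pprime_def by blast
    then show ?thesis
      using sum_mono[of F x z] x_le_z by (meson order_trans)
  qed
  ultimately show ?thesis
    using x_nonneg unfolding Pprime_def by blast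
qed

lemma Pwd_nonneg: "y \<in> Pwd n E f M' w d \<Longrightarrow> 0 \<le> y e"
  unfolding Pwd_def by (cases "e \<in> edgesX n E M'") auto

lemma Pwd_le_fext:
  assumes "w \<in> Pprime n E f M'" and "y \<in> Pwd n E f M' w d" and "e \<in> edgesX n E M'"
  shows "y e \<le> fext n E f (snd e) {e}"
proof -
  have "snd e \<in> M'" and "{e} \<subseteq> sedges (edgesX n E M') (snd e)"
    using assms(3) unfolding edgesX_def sedges_def by auto
  moreover have "(\<lambda>e. w e + y e) \<in> Pprime n E f M'"
    using assms(2) unfolding Pwd_def by blast
  ultimately have "sum (\<lambda>e. w e + y e) {e} \<le> fext n E f (snd e) {e}"
    unfolding Pprime_def by blast
  then show ?thesis
    using Pprime_nonneg[OF assms(1), of e] by simp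
qed

lemma closed_Pprime: "closed (Pprime n E f M')"
proof -
  define X where "X = edgesX n E M'"
  have "Pprime n E f M' = {w. (\<forall>e. e \<notin> X \<longrightarrow> w e = 0) \<and> (\<forall>e. e \<in> X \<longrightarrow> 0 \<le> w e)
      \<and> (\<forall>j. j \<in> M' \<longrightarrow> (\<forall>F. F \<subseteq> sedges X j \<longrightarrow> sum w F \<le> fext n E f j F))}"
    unfolding Pprime_def X_def by blast
  also have "closed \<dots>"
    by (intro closed_Collect_conj closed_Collect_all closed_Collect_const_imp
        closed_Collect_eq[OF continuous_on_product_coordinates continuous_on_const]
        closed_Collect_le[OF continuous_on_const continuous_on_product_coordinates]
        closed_Collect_le[OF continuous_on_sum_coordinates continuous_on_const])
  finally show ?thesis .
qed

lemma closed_Pwd: "closed (Pwd n E f M' w d)"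
proof -
  define X where "X = edgesX n E M'"
  have "Pwd n E f M' w d = {y. (\<forall>e. e \<notin> X \<longrightarrow> y e = 0) \<and> (\<forall>e. e \<in> X \<longrightarrow> 0 \<le> y e)}
      \<inter> (\<lambda>y e. w e + y e) -` Pprime n E f M'
      \<inter> {y. \<forall>k. k \<in> buyersN n M' \<longrightarrow> ereal (sum y (bedges X k)) \<le> d k}"
    unfolding Pwd_def X_def by blast
  also have "closed \<dots>"
  proof (intro closed_Int closed_vimage closed_Pprime)
    show "continuous_on UNIV (\<lambda>y e. w e + y e)"
      by (intro continuous_on_coordinatewise_then_product continuous_intros)
        (rule continuous_on_product_coordinates)
  qed (intro closed_Collect_conj closed_Collect_all closed_Collect_const_imp closed_sum_le_ereal
      closed_Collect_eq[OF continuous_on_product_coordinates continuous_on_const]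
      closed_Collect_le[OF continuous_on_const continuous_on_product_coordinates])+
  finally show ?thesis .
qed

lemma compact_Pwd:
  assumes "w \<in> Pprime n E f M'"
  shows "compact (Pwd n E f M' w d)"
proof -
  define box where "box = PiE UNIV (\<lambda>e. if e \<in> edgesX n E M' then {0..fext n E f (snd e) {e}} else {0})"
  have "Pwd n E f M' w d \<subseteq> box"
  proof
    fix y assume y: "y \<in> Pwd n E f M' w d"
    have "y e = 0" if "e \<notin> edgesX n E M'" for e
      using y that unfolding Pwd_def by blast
    then show "y \<in> box"
      using Pwd_nonneg[OF y] Pwd_le_fext[OF assms y] unfolding box_def by (auto simp: PiE_iff)
  qed
  moreover have "compact box"
    unfolding box_def by (rule compact_PiE_UNIV) simp
  ultimately show ?thesis
    using closed_Int_compact[OF closed_Pwd] by (metis Int_absorb2)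
qed

lemma Pwd_downward_closed:
  assumes w: "w \<in> Pprime n E f M'" and y: "y \<in> Pwd n E f M' w d"
    and x_nonneg: "\<And>e. 0 \<le> x e" and x_le_y: "\<And>e. x e \<le> y e"
  shows "x \<in> Pwd n E f M' w d"
proof -
  define X where "X = edgesX n E M'"
  have "(\<lambda>e. w e + x e) \<in> Pprime n E f M'"
  proof (rule Pprime_downward_closed)
    show "(\<lambda>e. w e + y e) \<in> Pprime n E f M'"
      using y unfolding Pwd_def by blast
  qed (use Pprime_nonneg[OF w] x_nonneg x_le_y in \<open>auto intro: add_nonneg_nonneg\<close>)
  moreover have "ereal (sum x (bedges X k)) \<le> d k" if "k \<in> buyersN n M'" for k
  proof -
    have "sum x (bedges X k) \<le> sum y (bedges X k)"
      by (rule sum_mono) (rule x_le_y)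
    moreover have "ereal (sum y (bedges X k)) \<le> d k"
      using y that unfolding Pwd_def X_def by blast
    ultimately show ?thesis
      by (meson ereal_less_eq(3) order_trans)
  qed
  moreover have "x e = 0" if "e \<notin> X" for e
  proof -
    have "y e = 0"
      using y that unfolding Pwd_def X_def by blast
    then show ?thesis
      using x_nonneg[of e] x_le_y[of e] by simp
  qed
  ultimately show ?thesis
    using x_nonneg unfolding Pwd_def X_def by blast
qed

lemma Piwd_subset_Piwd_zero:
  assumes w: "w \<in> Pprime n E f M'"
  shows "Piwd n E f M' w d i \<xi> \<subseteq> Piwd n E f M' w d i (\<lambda>_. 0)"
proof
  define X where "X = edgesX n E M'"
  fix u assume "u \<in> Piwd n E f M' w d i \<xi>"
  then obtain y where y: "y \<in> Pwd n E f M' w d"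
    and u: "\<forall>k\<in>buyersN n M' - {i}. u k = sum y (bedges X k)"
    and u_zero: "\<forall>k. k \<notin> buyersN n M' - {i} \<longrightarrow> u k = 0"
    unfolding Piwd_def X_def by auto
  define y' where "y' = (\<lambda>e. if e \<in> bedges X i then 0 else y e)"
  have "y' \<in> Pwd n E f M' w d"
    using Pwd_nonneg[OF y] by (intro Pwd_downward_closed[OF w y]) (simp_all add: y'_def)
  moreover have "\<forall>k\<in>buyersN n M' - {i}. u k = sum y' (bedges X k)"
  proof -
    have "sum y' (bedges X k) = sum y (bedges X k)" if "k \<noteq> i" for k
      using that by (intro sum.cong) (auto simp: y'_def bedges_def)
    then show ?thesis using u by auto
  qed
  moreover have "\<forall>e\<in>bedges X i. y' e = 0"
    by (simp add: y'_def)
  ultimately show "u \<in> Piwd n E f M' w d i (\<lambda>_. 0)"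
    using u_zero unfolding Piwd_def X_def[symmetric] by blast
qed

lemma zero_mem_Piwd_zero:
  assumes "(\<lambda>_. 0) \<in> Pwd n E f M' w d"
  shows "(\<lambda>_. 0) \<in> Piwd n E f M' w d i (\<lambda>_. 0)"
  unfolding Piwd_def using assms by (intro CollectI conjI bexI[of _ "\<lambda>_. 0"]) auto

lemma XiSet_eq_INT:
  assumes w: "w \<in> Pprime n E f M'" and zero: "(\<lambda>_. 0) \<in> Pwd n E f M' w d"
  shows "XiSet n E f M' w d i = (\<Inter>u\<in>Piwd n E f M' w d i (\<lambda>_. 0).
    (\<lambda>y e. if e \<in> bedges (edgesX n E M') i then y e else 0) `
      (Pwd n E f M' w d \<inter> {y. \<forall>k. k \<in> buyersN n M' - {i} \<longrightarrow> u k = sum y (bedges (edgesX n E M') k)}))"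
    (is "_ = (\<Inter>u\<in>?P0. ?g ` ?Ku u)")
proof (intro equalityI subsetI)
  define D where "D = bedges (edgesX n E M') i"
  fix \<xi> assume \<xi>: "\<xi> \<in> XiSet n E f M' w d i"
  then have \<xi>_zero: "\<forall>e. e \<notin> D \<longrightarrow> \<xi> e = 0" and "Piwd n E f M' w d i \<xi> = ?P0"
    unfolding XiSet_def D_def by auto
  show "\<xi> \<in> (\<Inter>u\<in>?P0. ?g ` ?Ku u)"
  proof
    fix u assume "u \<in> ?P0"
    with \<open>Piwd n E f M' w d i \<xi> = ?P0\<close> have "u \<in> Piwd n E f M' w d i \<xi>"
      by simp
    then obtain y where "y \<in> Pwd n E f M' w d" and "\<forall>e\<in>D. y e = \<xi> e"
      and "\<forall>k\<in>buyersN n M' - {i}. u k = sum y (bedges (edgesX n E M') k)"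
      unfolding Piwd_def D_def by blast
    then have "y \<in> ?Ku u"
      by blast
    moreover have "?g y = \<xi>"
      using \<open>\<forall>e\<in>D. y e = \<xi> e\<close> \<xi>_zero unfolding D_def by auto
    ultimately show "\<xi> \<in> ?g ` ?Ku u" by blast
  qed
next
  define D where "D = bedges (edgesX n E M') i"
  fix \<xi> assume \<xi>: "\<xi> \<in> (\<Inter>u\<in>?P0. ?g ` ?Ku u)"
  obtain y0 where "y0 \<in> Pwd n E f M' w d" and "\<xi> = ?g y0"
    using \<xi> zero_mem_Piwd_zero[OF zero] by blast
  then have "\<forall>e. e \<notin> D \<longrightarrow> \<xi> e = 0" and "\<forall>e. 0 \<le> \<xi> e"
    using Pwd_nonneg unfolding D_def by auto
  moreover have "Piwd n E f M' w d i \<xi> = ?P0"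
  proof
    show "Piwd n E f M' w d i \<xi> \<subseteq> ?P0"
      by (rule Piwd_subset_Piwd_zero[OF w])
    show "?P0 \<subseteq> Piwd n E f M' w d i \<xi>"
    proof
      fix u assume "u \<in> ?P0"
      then obtain y where "y \<in> ?Ku u" and "\<xi> = ?g y"
        using \<xi> by blast
      moreover have "\<forall>k. k \<notin> buyersN n M' - {i} \<longrightarrow> u k = 0"
        using \<open>u \<in> ?P0\<close> unfolding Piwd_def by blast
      ultimately show "u \<in> Piwd n E f M' w d i \<xi>"
        unfolding Piwd_def by auto
    qed
  qed
  ultimately show "\<xi> \<in> XiSet n E f M' w d i"
    unfolding XiSet_def mem_Collect_eq D_def by blast
qed

lemma compact_XiSet:
  assumes w: "w \<in> Pprime n E f M'" and zero: "(\<lambda>_. 0) \<in> Pwd n E f M' w d"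
  shows "compact (XiSet n E f M' w d i)"
proof -
  define X where "X = edgesX n E M'"
  define P0 where "P0 = Piwd n E f M' w d i (\<lambda>_. 0)"
  define Ku where "Ku u = Pwd n E f M' w d \<inter> {y. \<forall>k. k \<in> buyersN n M' - {i} \<longrightarrow> u k = sum y (bedges X k)}"
    for u :: "nat \<Rightarrow> real"
  define g where "g y = (\<lambda>e. if e \<in> bedges X i then y e else 0)" for y :: "nat \<times> nat \<Rightarrow> real"
  have "continuous_on UNIV g"
  proof (rule continuous_on_coordinatewise_then_product)
    fix e show "continuous_on UNIV (\<lambda>y. g y e)"
      by (cases "e \<in> bedges X i") (simp_all add: g_def)
  qed
  moreover have "compact (Ku u)" for u
    unfolding Ku_def
    by (intro compact_Int_closed compact_Pwd[OF w] closed_Collect_all closed_Collect_const_imp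
        closed_Collect_eq[OF continuous_on_const continuous_on_sum_coordinates])
  ultimately have compact_image: "compact (g ` Ku u)" for u
    by (metis compact_continuous_image continuous_on_subset subset_UNIV)
  have "XiSet n E f M' w d i = g ` Ku (\<lambda>_. 0) \<inter> (\<Inter>u\<in>P0. g ` Ku u)"
    using XiSet_eq_INT[OF w zero, of i] zero_mem_Piwd_zero[OF zero, of i]
    unfolding P0_def Ku_def g_def X_def by blast
  also have "compact \<dots>"
    by (intro compact_Int_closed compact_image closed_INT ballI compact_imp_closed)
  finally show ?thesis .
qed

lemma exists_maximal_XiSet:
  assumes "finite E" and "finite M'"
    and w: "w \<in> Pprime n E f M'" and zero: "(\<lambda>_. 0) \<in> Pwd n E f M' w d"
  shows "\<exists>\<xi>. \<xi> \<in> XiSet n E f M' w d i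
    \<and> (\<forall>\<xi>'\<in>XiSet n E f M' w d i. (\<forall>e. \<xi> e \<le> \<xi>' e) \<longrightarrow> \<xi>' = \<xi>)"
proof -
  have "finite (bedges (edgesX n E M') i)"
    using assms(1,2) unfolding bedges_def edgesX_def by simp
  moreover have "(\<lambda>_. 0) \<in> XiSet n E f M' w d i"
    unfolding XiSet_def by simp
  moreover have "\<xi> e = 0" if "\<xi> \<in> XiSet n E f M' w d i" and "e \<notin> bedges (edgesX n E M') i" for \<xi> e
    using that unfolding XiSet_def by blast
  ultimately show ?thesis
    using compact_has_componentwise_maximal[OF compact_XiSet[OF w zero]] by blast
qed

lemma choose_xi_mem_XiSet:
  assumes "finite E" and "finite M'"
    and "w \<in> Pprime n E f M'" and "(\<lambda>_. 0) \<in> Pwd n E f M' w d"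
  shows "choose_xi n E f M' w d i \<in> XiSet n E f M' w d i"
  using someI_ex[OF exists_maximal_XiSet[OF assms]] unfolding choose_xi_def by blast

lemma clinch_feasible:
  assumes w: "w \<in> Pprime n E f M'" and zero: "(\<lambda>_. 0) \<in> Pwd n E f M' w d"
    and \<xi>: "\<xi> \<in> XiSet n E f M' w d i"
  shows "(\<lambda>e. w e + \<xi> e) \<in> Pprime n E f M'"
    and "i \<in> buyersN n M' \<Longrightarrow> ereal (sum \<xi> (bedges (edgesX n E M') i)) \<le> d i"
proof -
  define D where "D = bedges (edgesX n E M') i"
  have \<xi>_zero: "\<forall>e. e \<notin> D \<longrightarrow> \<xi> e = 0" and \<xi>_nonneg: "\<forall>e. 0 \<le> \<xi> e"
    and Piwd_eq: "Piwd n E f M' w d i \<xi> = Piwd n E f M' w d i (\<lambda>_. 0)"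
    using \<xi> unfolding XiSet_def D_def by auto
  have "(\<lambda>_. 0) \<in> Piwd n E f M' w d i \<xi>"
    using zero_mem_Piwd_zero[OF zero] Piwd_eq by simp
  then obtain y where y: "y \<in> Pwd n E f M' w d" and y_eq: "\<forall>e\<in>D. y e = \<xi> e"
    unfolding Piwd_def D_def by blast
  show "(\<lambda>e. w e + \<xi> e) \<in> Pprime n E f M'"
  proof (rule Pprime_downward_closed)
    show "(\<lambda>e. w e + y e) \<in> Pprime n E f M'"
      using y unfolding Pwd_def by blast
    show "0 \<le> w e + \<xi> e" for e
      using Pprime_nonneg[OF w, of e] \<xi>_nonneg by simp
    show "w e + \<xi> e \<le> w e + y e" for e
      using y_eq \<xi>_zero Pwd_nonneg[OF y, of e] by (cases "e \<in> D") auto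
  qed
  show "ereal (sum \<xi> D) \<le> d i" if "i \<in> buyersN n M'"
  proof -
    have "sum \<xi> D = sum y D"
      using y_eq by simp
    then show ?thesis
      using y that unfolding Pwd_def D_def by auto
  qed
qed

lemma dval_nonneg:
  assumes "0 \<le> c k" and "k \<le> n \<Longrightarrow> p k \<le> B k"
  shows "0 \<le> dval n v B \<sigma> c p k"
  using assms unfolding dval_def by auto

lemma payment_le_budget:
  assumes x: "ereal x \<le> dval n v B \<sigma> c p i" and "0 \<le> c i" and "i \<le> n" and "p i \<le> B i"
  shows "p i + c i * x \<le> B i"
proof (cases "c i = 0")
  case False
  show ?thesis
  proof (cases "c i < v i")
    case True
    then have "x \<le> (B i - p i) / c i"
      using x False \<open>i \<le> n\<close> unfolding dval_def bidx_def by simp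
    then show ?thesis
      using False \<open>0 \<le> c i\<close> by (simp add: pos_le_divide_eq mult.commute)
  next
    case below: False
    then have "x \<le> 0"
      using x False \<open>i \<le> n\<close> unfolding dval_def bidx_def by (simp add: zero_ereal_def)
    then have "c i * x \<le> 0"
      using \<open>0 \<le> c i\<close> by (rule mult_nonneg_nonpos[rotated])
    then show ?thesis
      using \<open>p i \<le> B i\<close> by simp
  qed
qed (use \<open>p i \<le> B i\<close> in simp)

definition pca_invariant :: "nat \<Rightarrow> (nat \<times> nat) set \<Rightarrow> (nat \<Rightarrow> (nat \<times> nat) set \<Rightarrow> real)
    \<Rightarrow> (nat \<Rightarrow> real) \<Rightarrow> (nat \<Rightarrow> real) \<Rightarrow> nat set \<Rightarrow> (nat \<Rightarrow> real) \<Rightarrow> pca_state \<Rightarrow> bool" where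
  "pca_invariant n E f v B M' \<sigma> s \<longleftrightarrow> sw s \<in> Pprime n E f M' \<and> sd s = dval n v B \<sigma> (sc s) (sp s)
     \<and> (\<forall>k. 0 \<le> sc s k) \<and> (\<forall>k\<in>{1..n}. sp s k \<le> B k)"

lemma pca_invariant_zero_mem_Pwd:
  assumes I: "pca_invariant n E f v B M' \<sigma> s" and "0 \<notin> M'"
  shows "(\<lambda>_. 0) \<in> Pwd n E f M' (sw s) (sd s)"
proof -
  have "0 \<le> sd s k" if "k \<in> buyersN n M'" for k
  proof -
    have "k \<in> {1..n}" if "k \<le> n"
      using \<open>k \<in> buyersN n M'\<close> \<open>0 \<notin> M'\<close> that unfolding buyersN_def by auto
    then show ?thesis
      using I dval_nonneg[of "sc s" k n "sp s" B v \<sigma>] unfolding pca_invariant_def by auto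
  qed
  then show ?thesis
    using I unfolding Pwd_def pca_invariant_def by (simp add: zero_ereal_def)
qed

lemma pca_invariant_clinch_step:
  assumes I: "pca_invariant n E f v B M' \<sigma> s" and "finite E" and "finite M'" and "0 \<notin> M'"
    and i: "i \<in> buyersN n M'"
  shows "pca_invariant n E f v B M' \<sigma> (clinch_step n E f v B M' \<sigma> s i)"
proof -
  define X where "X = edgesX n E M'"
  define \<xi> where "\<xi> = choose_xi n E f M' (sw s) (sd s) i"
  have w: "sw s \<in> Pprime n E f M'" and d: "sd s = dval n v B \<sigma> (sc s) (sp s)"
    and c: "\<forall>k. 0 \<le> sc s k" and p: "\<forall>k\<in>{1..n}. sp s k \<le> B k"
    using I unfolding pca_invariant_def by auto
  note zero = pca_invariant_zero_mem_Pwd[OF I \<open>0 \<notin> M'\<close>]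
  have \<xi>: "\<xi> \<in> XiSet n E f M' (sw s) (sd s) i"
    unfolding \<xi>_def by (rule choose_xi_mem_XiSet[OF \<open>finite E\<close> \<open>finite M'\<close> w zero])
  have "sp s i + sc s i * sum \<xi> (bedges X i) \<le> B i" if "i \<in> {1..n}"
    using payment_le_budget[of "sum \<xi> (bedges X i)" n v B \<sigma> "sc s" "sp s" i]
      clinch_feasible(2)[OF w zero \<xi> i] d c p that unfolding X_def by auto
  then have "\<forall>k\<in>{1..n}. ((sp s)(i := sp s i + sc s i * sum \<xi> (bedges X i))) k \<le> B k"
    using p by auto
  then show ?thesis
    using clinch_feasible(1)[OF w zero \<xi>] c
    unfolding pca_invariant_def clinch_step_def Let_def \<xi>_def[symmetric] X_def[symmetric] by simp
qed

lemma pca_invariant_foldl: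
  assumes "pca_invariant n E f v B M' \<sigma> s" and "finite E" and "finite M'" and "0 \<notin> M'"
    and "set bs \<subseteq> buyersN n M'"
  shows "pca_invariant n E f v B M' \<sigma> (foldl (clinch_step n E f v B M' \<sigma>) s bs)"
  using assms
proof (induction bs arbitrary: s)
  case (Cons b bs)
  then show ?case
    using pca_invariant_clinch_step[of n E f v B M' \<sigma> s b] by simp
qed simp

lemma pca_invariant_round:
  assumes I: "pca_invariant n E f v B M' \<sigma> s" and "finite E" and "finite M'" and "0 \<notin> M'"
    and "0 \<le> \<epsilon>"
  shows "pca_invariant n E f v B M' \<sigma> (pca_round n E f \<epsilon> v B M' \<sigma> s)"
proof -
  define bs where "bs = sorted_list_of_set (buyersN n M')"
  define s1 where "s1 = foldl (clinch_step n E f v B M' \<sigma>) s bs"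
  define l where "l = bs ! sl s1"
  define c' where "c' = (sc s1)(l := sc s1 l + \<epsilon>)"
  have "finite (buyersN n M')"
    unfolding buyersN_def using \<open>finite M'\<close> by simp
  then have I1: "pca_invariant n E f v B M' \<sigma> s1"
    unfolding s1_def bs_def using assms(1-4) by (intro pca_invariant_foldl) simp_all
  have "(sd s1)(l := dval n v B \<sigma> c' (sp s1) l) = dval n v B \<sigma> c' (sp s1)"
    using I1 unfolding pca_invariant_def c'_def dval_def by auto
  moreover have "\<forall>k. 0 \<le> c' k"
    using I1 \<open>0 \<le> \<epsilon>\<close> unfolding pca_invariant_def c'_def by auto
  ultimately show ?thesis
    using I1 unfolding pca_round_def Let_def bs_def[symmetric] s1_def[symmetric] l_def[symmetric]
      c'_def[symmetric] pca_invariant_def by simp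
qed

lemma fext_nonneg:
  assumes f: "\<forall>S. S \<subseteq> sedges E j \<longrightarrow> 0 \<le> f j S" and F: "F \<subseteq> sedges (edgesX n E M') j"
  shows "0 \<le> fext n E f j F"
proof (cases "(n + j, j) \<in> F")
  case False
  have "F \<subseteq> sedges E j"
    using F False unfolding sedges_def edgesX_def by auto
  then show ?thesis
    using f False unfolding fext_def by simp
qed (use f in \<open>simp add: fext_def\<close>)

lemma pca_invariant_init:
  assumes "\<forall>j\<in>M'. \<forall>S. S \<subseteq> sedges E j \<longrightarrow> 0 \<le> f j S" and "\<forall>i\<in>{1..n}. 0 \<le> B i"
  shows "pca_invariant n E f v B M' \<sigma> pca_init"
proof -
  have "(\<lambda>_. 0) \<in> Pprime n E f M'"
    unfolding Pprime_def using assms(1) fext_nonneg by auto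
  moreover have "(\<lambda>_. \<infinity>) = dval n v B \<sigma> (\<lambda>_. 0) (\<lambda>_. 0)"
    unfolding dval_def by auto
  ultimately show ?thesis
    unfolding pca_invariant_def pca_init_def using assms(2) by simp
qed

lemma pca_alloc_nonneg:
  assumes "finite E" and "finite M'" and "0 \<notin> M'"
    and "\<forall>j\<in>M'. \<forall>S. S \<subseteq> sedges E j \<longrightarrow> 0 \<le> f j S" and "\<forall>i\<in>{1..n}. 0 \<le> B i"
    and "0 \<le> \<epsilon>"
  shows "0 \<le> sw (pca n E f \<epsilon> v B M' \<sigma>) e"
proof (cases "while_option (\<lambda>s. \<exists>i \<in> buyersN n M'. sd s i \<noteq> 0) (pca_round n E f \<epsilon> v B M' \<sigma>) pca_init")
  case (Some t)
  have "pca_invariant n E f v B M' \<sigma> t"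
    using while_option_rule[where P = "pca_invariant n E f v B M' \<sigma>", OF _ Some]
      pca_invariant_round[OF _ assms(1-3,6)] pca_invariant_init[OF assms(4,5)] by blast
  then have "sw t \<in> Pprime n E f M'"
    unfolding pca_invariant_def by blast
  then show ?thesis
    using Some Pprime_nonneg unfolding pca_def by simp
qed (simp add: pca_def pca_init_def)

definition seller_welfare :: "nat set \<Rightarrow> (nat \<times> nat) set \<Rightarrow> (nat \<Rightarrow> (nat \<times> nat) set \<Rightarrow> real)
    \<Rightarrow> (nat \<Rightarrow> real) \<Rightarrow> ((nat \<times> nat) \<Rightarrow> real) \<Rightarrow> real" where
  "seller_welfare J E f \<rho> w = (\<Sum>j\<in>J. \<rho> j * (f j (sedges E j) - sum w (sedges E j)))"

lemma mech_alloc_support: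
  "mech_alloc n m E f \<epsilon> v B \<rho>' \<rho>s e \<noteq> 0 \<Longrightarrow> e \<in> E \<and> snd e \<in> {j \<in> {1..m}. \<rho>' j \<le> \<rho>s j}"
  unfolding mech_alloc_def Let_def by (auto split: if_splits)

lemma mech_alloc_nonneg:
  assumes "finite E" and "\<forall>j\<in>{1..m}. \<forall>S. S \<subseteq> sedges E j \<longrightarrow> 0 \<le> f j S"
    and "\<forall>i\<in>{1..n}. 0 \<le> B i" and "0 \<le> \<epsilon>"
  shows "0 \<le> mech_alloc n m E f \<epsilon> v B \<rho>' \<rho>s e"
  unfolding mech_alloc_def Let_def
  using pca_alloc_nonneg[OF assms(1) _ _ _ assms(3,4), of "{j \<in> {1..m}. \<rho>' j \<le> \<rho>s j}" f v]
    assms(2) by simp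

lemma LW_mech_eq_LW_PCA:
  assumes "finite E"
  shows "LW_mech n m E f \<epsilon> v B \<rho> \<rho>s - seller_welfare {1..m} E f \<rho> (mech_alloc n m E f \<epsilon> v B \<rho> \<rho>s)
    = LW_PCA n E f \<epsilon> v B {j \<in> {1..m}. \<rho> j \<le> \<rho>s j} \<rho>s
      - seller_welfare {j \<in> {1..m}. \<rho> j \<le> \<rho>s j} E f \<rho>s (mech_alloc n m E f \<epsilon> v B \<rho> \<rho>s)"
proof -
  define Mt where "Mt = {j \<in> {1..m}. \<rho> j \<le> \<rho>s j}"
  define w where "w = mech_alloc n m E f \<epsilon> v B \<rho> \<rho>s"
  have "LW_PCA n E f \<epsilon> v B Mt \<rho>s = LW_sub n E f v B Mt \<rho>s w"
    unfolding LW_PCA_def w_def mech_alloc_def Mt_def Let_def by simp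
  moreover have "sum w (bedges E i) = sum w (bedges {e \<in> E. snd e \<in> Mt} i)" for i
    using assms mech_alloc_support[of n m E f \<epsilon> v B \<rho> \<rho>s] unfolding w_def Mt_def bedges_def
    by (intro sum.mono_neutral_right) auto
  ultimately show ?thesis
    unfolding Mt_def[symmetric] LW_mech_def w_def[symmetric] LW_full_def LW_sub_def seller_welfare_def
    by simp
qed

lemma exchange_le:
  fixes a b F sa sb :: real
  assumes "0 \<le> a" and "0 \<le> b" and "0 \<le> F" and "0 \<le> sa" and "0 \<le> sb"
    and "a < b \<Longrightarrow> sa = 0" and "b < a \<Longrightarrow> sb = 0"
  shows "(if b \<le> a then a * (F - sa) else 0) + (if a \<le> b then b * (F - sb) else 0)
    \<le> b * (F - sa) + a * (F - sb)"
proof (cases a b rule: linorder_cases)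
  case less
  then have "0 \<le> a * F + (b - a) * sb"
    using assms by simp
  then show ?thesis
    using less assms(6) by (simp add: algebra_simps)
next
  case greater
  then have "0 \<le> b * F + (a - b) * sa"
    using assms by simp
  then show ?thesis
    using greater assms(7) by (simp add: algebra_simps)
qed simp

lemma seller_welfare_exchange:
  assumes "finite J" and nonneg: "\<forall>j\<in>J. 0 \<le> a j \<and> 0 \<le> b j \<and> 0 \<le> f j (sedges E j)"
    and "\<And>e. 0 \<le> wa e" and "\<And>e. 0 \<le> wb e"
    and wa_support: "\<And>e. wa e \<noteq> 0 \<Longrightarrow> snd e \<in> {j \<in> J. b j \<le> a j}"
    and wb_support: "\<And>e. wb e \<noteq> 0 \<Longrightarrow> snd e \<in> {j \<in> J. a j \<le> b j}"
  shows "seller_welfare {j \<in> J. b j \<le> a j} E f a wa + seller_welfare {j \<in> J. a j \<le> b j} E f b wb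
    \<le> seller_welfare J E f b wa + seller_welfare J E f a wb"
proof -
  define F where "F j = f j (sedges E j)" for j
  define sa where "sa j = sum wa (sedges E j)" for j
  define sb where "sb j = sum wb (sedges E j)" for j
  have "sa j = 0" if "j \<in> J" and "a j < b j" for j
    unfolding sa_def sedges_def using wa_support that by (intro sum.neutral) fastforce
  moreover have "sb j = 0" if "j \<in> J" and "b j < a j" for j
    unfolding sb_def sedges_def using wb_support that by (intro sum.neutral) fastforce
  moreover have "0 \<le> sa j" and "0 \<le> sb j" for j
    unfolding sa_def sb_def using assms(3,4) by (simp_all add: sum_nonneg)
  ultimately have "(\<Sum>j\<in>J. (if b j \<le> a j then a j * (F j - sa j) else 0)
        + (if a j \<le> b j then b j * (F j - sb j) else 0))
      \<le> (\<Sum>j\<in>J. b j * (F j - sa j) + a j * (F j - sb j))"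
    using nonneg unfolding F_def by (intro sum_mono exchange_le) auto
  then show ?thesis
    unfolding seller_welfare_def sum.inter_filter[OF \<open>finite J\<close>] F_def sa_def sb_def
    by (simp add: sum.distrib)
qed

theorem lemma4p6:
  fixes n m :: nat and E :: "(nat \<times> nat) set"
    and f :: "nat \<Rightarrow> (nat \<times> nat) set \<Rightarrow> real"
    and v B \<rho>a \<rho>b :: "nat \<Rightarrow> real" and \<epsilon> :: real
  assumes E_sub: "E \<subseteq> {1..n} \<times> {1..m}"
    and f_empty: "\<forall>j \<in> {1..m}. f j {} = 0"
    and f_nonneg: "\<forall>j \<in> {1..m}. \<forall>S. S \<subseteq> sedges E j \<longrightarrow> 0 \<le> f j S"
    and f_mono: "\<forall>j \<in> {1..m}. \<forall>S T. S \<subseteq> T \<and> T \<subseteq> sedges E j \<longrightarrow> f j S \<le> f j T"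
    and f_submod: "\<forall>j \<in> {1..m}. \<forall>S T. S \<subseteq> sedges E j \<and> T \<subseteq> sedges E j
                      \<longrightarrow> f j (S \<union> T) + f j (S \<inter> T) \<le> f j S + f j T"
    and v_pos: "\<forall>i \<in> {1..n}. 0 < v i"
    and B_nonneg: "\<forall>i \<in> {1..n}. 0 \<le> B i"
    and eps_pos: "0 < \<epsilon>"
    and v_grid: "\<forall>i \<in> {1..n}. \<exists>k::nat. 0 < k \<and> v i = real k * \<epsilon>"
    and \<rho>a_pos: "\<forall>j \<in> {1..m}. 0 < \<rho>a j"
    and \<rho>b_pos: "\<forall>j \<in> {1..m}. 0 < \<rho>b j"
    and \<rho>a_grid: "\<forall>j \<in> {1..m}. \<exists>k::nat. 0 < k \<and> \<rho>a j = real k * \<epsilon>"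
    and \<rho>b_grid: "\<forall>j \<in> {1..m}. \<exists>k::nat. 0 < k \<and> \<rho>b j = real k * \<epsilon>"
  shows "LW_mech n m E f \<epsilon> v B \<rho>a \<rho>b + LW_mech n m E f \<epsilon> v B \<rho>b \<rho>a
         \<ge> LW_PCA n E f \<epsilon> v B {j \<in> {1..m}. \<rho>a j \<ge> \<rho>b j} \<rho>a
           + LW_PCA n E f \<epsilon> v B {j \<in> {1..m}. \<rho>a j \<le> \<rho>b j} \<rho>b"
proof -
  have "finite E"
    using E_sub finite_subset by blast
  define wa where "wa = mech_alloc n m E f \<epsilon> v B \<rho>b \<rho>a"
  define wb where "wb = mech_alloc n m E f \<epsilon> v B \<rho>a \<rho>b"
  have "0 \<le> wa e" and "0 \<le> wb e" for e
    unfolding wa_def wb_def using mech_alloc_nonneg[OF \<open>finite E\<close> f_nonneg B_nonneg] eps_pos by simp_all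
  then have "seller_welfare {j \<in> {1..m}. \<rho>b j \<le> \<rho>a j} E f \<rho>a wa
      + seller_welfare {j \<in> {1..m}. \<rho>a j \<le> \<rho>b j} E f \<rho>b wb
    \<le> seller_welfare {1..m} E f \<rho>b wa + seller_welfare {1..m} E f \<rho>a wb"
    using \<rho>a_pos \<rho>b_pos f_nonneg mech_alloc_support unfolding wa_def wb_def
    by (intro seller_welfare_exchange) (auto simp: less_imp_le)
  then show ?thesis
    using LW_mech_eq_LW_PCA[OF \<open>finite E\<close>, of n m f \<epsilon> v B \<rho>b \<rho>a]
      LW_mech_eq_LW_PCA[OF \<open>finite E\<close>, of n m f \<epsilon> v B \<rho>a \<rho>b]
    unfolding wa_def wb_def by linarith
qed

end
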